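(* Let $T$ be a complete affine $L$-theory and let $M\models T$ be compact (as a metric space). Then every extreme type $p\in E_n(T)$ is realized in $M$.
   Context: Affine continuous logic: structures are complete metric spaces of diameter $\le1$ with Lipschitz interpretations; affine formulas built from atomic $1,d(t_1,t_2),R(\bar t)$ by $+$, real scalars, $\sup$, $\inf$. An $n$-type of $T$ is a positive linear functional $p$ with $p(1)=1$ on the space of affine formulas in $n$ free variables modulo $T$-equivalence (ordered by $0\le\phi$ iff $T\models0\le\inf_{\bar x}\phi$); $K_n(T)$ is the compact convex set of $n$-types, $E_n(T)$ its set of extreme points. $\bar a\in M$ realizes $p$ if $p(\phi)=\phi^M(\bar a)$ for all $\phi$. *)

theory Defs
  imports "HOL-Analysis.Analysis"
begin

record ('f, 'r) lang =
  farity :: "'f \<Rightarrow> nat"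
  rarity :: "'r \<Rightarrow> nat"
  flip   :: "'f \<Rightarrow> real"
  rlip   :: "'r \<Rightarrow> real"

datatype 'f trm = Var nat | Fn 'f "'f trm list"

datatype ('f, 'r) fml =
    One
  | Dist "'f trm" "'f trm"
  | Rel 'r "'f trm list"
  | Plus "('f, 'r) fml" "('f, 'r) fml"
  | Scale real "('f, 'r) fml"
  | Sup nat "('f, 'r) fml"
  | Inf nat "('f, 'r) fml"

fun wf_trm :: "('f, 'r, 'z) lang_scheme \<Rightarrow> 'f trm \<Rightarrow> bool" where
  "wf_trm L (Var i) = True"
| "wf_trm L (Fn f ts) = (length ts = farity L f \<and> (\<forall>t\<in>set ts. wf_trm L t))"

fun wf_fml :: "('f, 'r, 'z) lang_scheme \<Rightarrow> ('f, 'r) fml \<Rightarrow> bool" where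
  "wf_fml L One = True"
| "wf_fml L (Dist s t) = (wf_trm L s \<and> wf_trm L t)"
| "wf_fml L (Rel R ts) = (length ts = rarity L R \<and> (\<forall>t\<in>set ts. wf_trm L t))"
| "wf_fml L (Plus \<phi> \<psi>) = (wf_fml L \<phi> \<and> wf_fml L \<psi>)"
| "wf_fml L (Scale r \<phi>) = wf_fml L \<phi>"
| "wf_fml L (Sup x \<phi>) = wf_fml L \<phi>"
| "wf_fml L (Inf x \<phi>) = wf_fml L \<phi>"

fun tvars :: "'f trm \<Rightarrow> nat set" where
  "tvars (Var i) = {i}"
| "tvars (Fn f ts) = (\<Union>t\<in>set ts. tvars t)"

fun fv :: "('f, 'r) fml \<Rightarrow> nat set" where
  "fv One = {}"
| "fv (Dist s t) = tvars s \<union> tvars t"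
| "fv (Rel R ts) = (\<Union>t\<in>set ts. tvars t)"
| "fv (Plus \<phi> \<psi>) = fv \<phi> \<union> fv \<psi>"
| "fv (Scale r \<phi>) = fv \<phi>"
| "fv (Sup x \<phi>) = fv \<phi> - {x}"
| "fv (Inf x \<phi>) = fv \<phi> - {x}"

definition fmls :: "('f, 'r, 'z) lang_scheme \<Rightarrow> nat \<Rightarrow> ('f, 'r) fml set" where
  "fmls L n = {\<phi>. wf_fml L \<phi> \<and> fv \<phi> \<subseteq> {..<n}}"

definition sentences :: "('f, 'r, 'z) lang_scheme \<Rightarrow> ('f, 'r) fml set" where
  "sentences L = fmls L 0"

fun infs :: "nat \<Rightarrow> ('f, 'r) fml \<Rightarrow> ('f, 'r) fml" where
  "infs 0 \<phi> = \<phi>"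
| "infs (Suc n) \<phi> = infs n (Inf n \<phi>)"

record ('a, 'f, 'r) struc =
  univ :: "'a set"
  fint :: "'f \<Rightarrow> 'a list \<Rightarrow> 'a"
  rint :: "'r \<Rightarrow> 'a list \<Rightarrow> real"

definition list_dist :: "'a::metric_space list \<Rightarrow> 'a list \<Rightarrow> real" where
  "list_dist as bs = (\<Sum>i<length as. dist (as ! i) (bs ! i))"

definition is_structure ::
  "('f, 'r, 'z) lang_scheme \<Rightarrow> ('a::metric_space, 'f, 'r, 'w) struc_scheme \<Rightarrow> bool" where
  "is_structure L M \<longleftrightarrow>
     univ M \<noteq> {} \<and> complete (univ M) \<and>
     (\<forall>x\<in>univ M. \<forall>y\<in>univ M. dist x y \<le> 1) \<and>
     (\<forall>f as. length as = farity L f \<and> set as \<subseteq> univ M \<longrightarrow> fint M f as \<in> univ M) \<and>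
     (\<forall>f as bs. length as = farity L f \<and> length bs = farity L f \<and>
        set as \<subseteq> univ M \<and> set bs \<subseteq> univ M \<longrightarrow>
        dist (fint M f as) (fint M f bs) \<le> flip L f * list_dist as bs) \<and>
     (\<forall>R as bs. length as = rarity L R \<and> length bs = rarity L R \<and>
        set as \<subseteq> univ M \<and> set bs \<subseteq> univ M \<longrightarrow>
        \<bar>rint M R as - rint M R bs\<bar> \<le> rlip L R * list_dist as bs)"

fun teval :: "('a, 'f, 'r, 'w) struc_scheme \<Rightarrow> (nat \<Rightarrow> 'a) \<Rightarrow> 'f trm \<Rightarrow> 'a" where
  "teval M \<sigma> (Var i) = \<sigma> i"
| "teval M \<sigma> (Fn f ts) = fint M f (map (teval M \<sigma>) ts)"

fun eval :: "('a::metric_space, 'f, 'r, 'w) struc_scheme \<Rightarrow> (nat \<Rightarrow> 'a) \<Rightarrow> ('f, 'r) fml \<Rightarrow> real" where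
  "eval M \<sigma> One = 1"
| "eval M \<sigma> (Dist s t) = dist (teval M \<sigma> s) (teval M \<sigma> t)"
| "eval M \<sigma> (Rel R ts) = rint M R (map (teval M \<sigma>) ts)"
| "eval M \<sigma> (Plus \<phi> \<psi>) = eval M \<sigma> \<phi> + eval M \<sigma> \<psi>"
| "eval M \<sigma> (Scale r \<phi>) = r * eval M \<sigma> \<phi>"
| "eval M \<sigma> (Sup x \<phi>) = (SUP a\<in>univ M. eval M (\<sigma>(x := a)) \<phi>)"
| "eval M \<sigma> (Inf x \<phi>) = (INF a\<in>univ M. eval M (\<sigma>(x := a)) \<phi>)"

text \<open>A complete affine L-theory is represented by the value it assigns to every
  affine L-sentence (the maximal set of closed conditions sigma = r).\<close>
definition models ::
  "('f, 'r, 'z) lang_scheme \<Rightarrow> ('a::metric_space, 'f, 'r, 'w) struc_scheme \<Rightarrow> (('f, 'r) fml \<Rightarrow> real) \<Rightarrow> bool" where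
  "models L M T \<longleftrightarrow> is_structure L M \<and>
     (\<forall>\<sigma>\<in>sentences L. \<forall>s. (\<forall>i. s i \<in> univ M) \<longrightarrow> eval M s \<sigma> = T \<sigma>)"

text \<open>The order on formulas in n variables: 0 <= phi iff T |= 0 <= inf_x phi;
  for a complete theory T this means that the sentence inf_x phi has value >= 0.\<close>
definition T_nonneg :: "(('f, 'r) fml \<Rightarrow> real) \<Rightarrow> nat \<Rightarrow> ('f, 'r) fml \<Rightarrow> bool" where
  "T_nonneg T n \<phi> \<longleftrightarrow> 0 \<le> T (infs n \<phi>)"

text \<open>K_n(T): positive linear functionals p with p(1) = 1 on the affine formulas in
  n free variables (modulo T-equivalence; positivity plus linearity makes p
  automatically constant on T-equivalence classes).\<close>
definition types ::
  "('f, 'r, 'z) lang_scheme \<Rightarrow> (('f, 'r) fml \<Rightarrow> real) \<Rightarrow> nat \<Rightarrow> (('f, 'r) fml \<Rightarrow> real) set" where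
  "types L T n = {p.
     (\<forall>\<phi>. \<phi> \<notin> fmls L n \<longrightarrow> p \<phi> = 0) \<and>
     p One = 1 \<and>
     (\<forall>\<phi>\<in>fmls L n. \<forall>\<psi>\<in>fmls L n. p (Plus \<phi> \<psi>) = p \<phi> + p \<psi>) \<and>
     (\<forall>r. \<forall>\<phi>\<in>fmls L n. p (Scale r \<phi>) = r * p \<phi>) \<and>
     (\<forall>\<phi>\<in>fmls L n. T_nonneg T n \<phi> \<longrightarrow> 0 \<le> p \<phi>)}"

definition extreme_pt :: "('b \<Rightarrow> real) set \<Rightarrow> ('b \<Rightarrow> real) \<Rightarrow> bool" where
  "extreme_pt K p \<longleftrightarrow> p \<in> K \<and>
     (\<forall>q\<in>K. \<forall>r\<in>K. \<forall>t::real. 0 < t \<and> t < 1 \<and> p = (\<lambda>\<phi>. t * q \<phi> + (1 - t) * r \<phi>) \<longrightarrow> q = r)"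

definition extreme_types ::
  "('f, 'r, 'z) lang_scheme \<Rightarrow> (('f, 'r) fml \<Rightarrow> real) \<Rightarrow> nat \<Rightarrow> (('f, 'r) fml \<Rightarrow> real) set" where
  "extreme_types L T n = {p. extreme_pt (types L T n) p}"

definition realizes ::
  "('f, 'r, 'z) lang_scheme \<Rightarrow> ('a::metric_space, 'f, 'r, 'w) struc_scheme \<Rightarrow> nat \<Rightarrow> (nat \<Rightarrow> 'a) \<Rightarrow> (('f, 'r) fml \<Rightarrow> real) \<Rightarrow> bool" where
  "realizes L M n a p \<longleftrightarrow> (\<forall>i. a i \<in> univ M) \<and> (\<forall>\<phi>\<in>fmls L n. p \<phi> = eval M a \<phi>)"

end

(* Formulas in x_0, ..., x_(n-1) are regarded as real functions on the space of assignments
   M^omega, which is compact in the product topology. Each formula is Lipschitz in its finitely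
   many free variables, hence continuous. As M is a model of the complete theory T, positivity
   modulo T is pointwise positivity on M^omega, so n-types are exactly the positive unital
   linear functionals (states) on the space F of definable functions, and extreme types are
   extreme states. An extreme state of such a function system on a compact space K is a point
   evaluation: otherwise each point of K has a neighbourhood on which some f in F stays above a
   bound c with state(f) < c, and finitely many of these neighbourhoods U_j cover K. Extending
   the state by Hahn-Banach to a positive functional g on all bounded functions, some U_j has
   mass t = g(1_U_j) > 0, and the state dominates t times the state f |-> g(1_U_j f) / t.
   Extremality forces the two states to coincide, contradicting the choice of f on U_j. *)

theory Submission
  imports Defs "HOL-Library.Function_Algebras"
begin

section \<open>Hahn-Banach extension dominated by a sublinear functional\<close>

instantiation "fun" :: (type, real_vector) real_vector
begin

definition scaleR_fun :: "real \<Rightarrow> ('a \<Rightarrow> 'b) \<Rightarrow> 'a \<Rightarrow> 'b" where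
  "scaleR_fun c f = (\<lambda>x. c *\<^sub>R f x)"

instance
  by standard (simp_all add: scaleR_fun_def fun_eq_iff scaleR_add_right scaleR_add_left)

end

lemma scaleR_fun_apply [simp]: "(c *\<^sub>R f) x = c *\<^sub>R f x"
  by (simp add: scaleR_fun_def)

lemma sum_fun_apply: "(\<Sum>i\<in>I. f i) x = (\<Sum>i\<in>I. f i x)"
  by (induction I rule: infinite_finite_induct) auto

definition linear_functional_on :: "'v::real_vector set \<Rightarrow> ('v \<Rightarrow> real) \<Rightarrow> bool" where
  "linear_functional_on W g \<longleftrightarrow>
     (\<forall>x\<in>W. \<forall>y\<in>W. g (x + y) = g x + g y) \<and> (\<forall>c. \<forall>x\<in>W. g (c *\<^sub>R x) = c * g x)"

lemma linear_functional_on_add: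
  "linear_functional_on W g \<Longrightarrow> x \<in> W \<Longrightarrow> y \<in> W \<Longrightarrow> g (x + y) = g x + g y"
  by (simp add: linear_functional_on_def)

lemma linear_functional_on_scale:
  "linear_functional_on W g \<Longrightarrow> x \<in> W \<Longrightarrow> g (c *\<^sub>R x) = c * g x"
  by (simp add: linear_functional_on_def)

lemma linear_functional_on_diff:
  assumes W: "subspace W" and g: "linear_functional_on W g" and "x \<in> W" "y \<in> W"
  shows "g (x - y) = g x - g y"
proof -
  have "(- 1) *\<^sub>R y \<in> W" using subspace_scale[OF W \<open>y \<in> W\<close>] .
  then have "g (x + (- 1) *\<^sub>R y) = g x + (- 1) * g y"
    using g \<open>x \<in> W\<close> \<open>y \<in> W\<close> unfolding linear_functional_on_def by presburger
  then show ?thesis by simp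
qed

lemma linear_functional_on_sum:
  assumes W: "subspace W" and g: "linear_functional_on W g"
    and "finite I" "\<And>i. i \<in> I \<Longrightarrow> h i \<in> W"
  shows "g (\<Sum>i\<in>I. h i) = (\<Sum>i\<in>I. g (h i))"
  using assms(3,4)
proof (induction I rule: finite_induct)
  case empty
  have "g (0 *\<^sub>R 0) = 0 * g 0"
    using g subspace_0[OF W] unfolding linear_functional_on_def by blast
  then show ?case by simp
next
  case (insert i I)
  have "h i \<in> W" "(\<Sum>i\<in>I. h i) \<in> W" using insert.prems by (auto intro: subspace_sum[OF W])
  then show ?case using insert g unfolding linear_functional_on_def by simp
qed

definition sublinear_on :: "'v::real_vector set \<Rightarrow> ('v \<Rightarrow> real) \<Rightarrow> bool" where
  "sublinear_on W P \<longleftrightarrow>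
     (\<forall>x\<in>W. \<forall>y\<in>W. P (x + y) \<le> P x + P y) \<and> (\<forall>c\<ge>0. \<forall>x\<in>W. P (c *\<^sub>R x) = c * P x)"

text \<open>A partial extension of f is encoded by its graph, a subspace of 'v \<times> real.\<close>
definition dominated_extension ::
  "'v::real_vector set \<Rightarrow> 'v set \<Rightarrow> ('v \<Rightarrow> real) \<Rightarrow> ('v \<Rightarrow> real) \<Rightarrow> ('v \<times> real) set \<Rightarrow> bool" where
  "dominated_extension W S P f G \<longleftrightarrow>
     subspace G \<and> (\<forall>(x, s)\<in>G. x \<in> W \<and> s \<le> P x) \<and> (\<forall>x\<in>S. (x, f x) \<in> G)"

lemma dominated_extension_graph:
  assumes S: "subspace S" and f: "linear_functional_on S f" and f_le_P: "\<forall>x\<in>S. f x \<le> P x"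
    and "S \<subseteq> W"
  shows "dominated_extension W S P f {(x, f x) | x. x \<in> S}"
  unfolding dominated_extension_def
proof (intro conjI subspaceI)
  have "f (0 *\<^sub>R 0) = 0 * f 0"
    using f subspace_0[OF S] unfolding linear_functional_on_def by blast
  then show "0 \<in> {(x, f x) |x. x \<in> S}"
    using subspace_0[OF S] by (auto simp: zero_prod_def)
qed (use assms in \<open>auto simp: linear_functional_on_def subspace_add subspace_scale\<close>)

lemma dominated_extension_Union_chain:
  assumes C: "C \<in> chains {G. dominated_extension W S P f G}" "C \<noteq> {}"
  shows "dominated_extension W S P f (\<Union>C)"
proof -
  have in_chain: "dominated_extension W S P f G" if "G \<in> C" for G
    using C that by (auto simp: chains_def)
  have sub: "subspace G" if "G \<in> C" for G
    using in_chain[OF that] by (simp add: dominated_extension_def)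
  have "subspace (\<Union>C)"
  proof (rule subspaceI)
    show "0 \<in> \<Union>C" using C(2) sub subspace_0 by blast
    show "x + y \<in> \<Union>C" if "x \<in> \<Union>C" "y \<in> \<Union>C" for x y
    proof -
      from that obtain G H where "x \<in> G" "y \<in> H" "G \<in> C" "H \<in> C" by blast
      moreover have "G \<subseteq> H \<or> H \<subseteq> G"
        using C(1) \<open>G \<in> C\<close> \<open>H \<in> C\<close> by (auto simp: chains_def chain_subset_def)
      ultimately show ?thesis using sub subspace_add by blast
    qed
    show "c *\<^sub>R x \<in> \<Union>C" if "x \<in> \<Union>C" for c x
      using that sub subspace_scale by blast
  qed
  then show ?thesis
    using in_chain C(2) unfolding dominated_extension_def by blast
qed

lemma dominated_extension_single_valued:
  assumes G: "dominated_extension W S P f G" and P0: "P 0 = 0"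
    and "(x, s) \<in> G" "(x, t) \<in> G"
  shows "s = t"
proof -
  have dom: "\<And>x s. (x, s) \<in> G \<Longrightarrow> s \<le> P x" and sub: "subspace G"
    using G unfolding dominated_extension_def by auto
  have "(0, s - t) \<in> G" "(0, t - s) \<in> G"
    using subspace_diff[OF sub] assms(3,4) by force+
  then show ?thesis using dom[of 0 "s - t"] dom[of 0 "t - s"] P0 by linarith
qed

lemma sublinear_on_zero:
  assumes "subspace W" "sublinear_on W P"
  shows "P 0 = 0"
proof -
  have "P (0 *\<^sub>R 0) = 0 * P 0"
    using assms subspace_0[OF assms(1)] unfolding sublinear_on_def by blast
  then show ?thesis by simp
qed

lemma dominated_extension_value_bounds:
  assumes G: "dominated_extension W S P f G" and W: "subspace W" and P: "sublinear_on W P"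
    and x0: "x0 \<in> W"
  obtains c where "\<And>x s. (x, s) \<in> G \<Longrightarrow> s - P (x - x0) \<le> c"
    "\<And>x s. (x, s) \<in> G \<Longrightarrow> c \<le> P (x + x0) - s"
proof -
  have dom: "\<And>x s. (x, s) \<in> G \<Longrightarrow> x \<in> W \<and> s \<le> P x" and sub: "subspace G"
    using G unfolding dominated_extension_def by auto
  have sandwich: "r - P (y - x0) \<le> P (x + x0) - s" if "(x, s) \<in> G" "(y, r) \<in> G" for x s y r
  proof -
    have "(y + x, r + s) \<in> G" using subspace_add[OF sub that(2,1)] by simp
    then have "r + s \<le> P ((y - x0) + (x + x0))" using dom by simp
    also have "\<dots> \<le> P (y - x0) + P (x + x0)"
      using P dom that W x0 unfolding sublinear_on_def by (meson subspace_add subspace_diff)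
    finally show ?thesis by simp
  qed
  have G0: "(0, 0) \<in> G" using subspace_0[OF sub] by (simp add: zero_prod_def)
  define c where "c = (SUP (y, r)\<in>G. r - P (y - x0))"
  show ?thesis
  proof (rule that)
    show "s - P (x - x0) \<le> c" if "(x, s) \<in> G" for x s
      unfolding c_def using that sandwich[OF G0]
      by (intro cSUP_upper2[where x = "(x, s)"]) (auto intro!: bdd_aboveI2)
    show "c \<le> P (x + x0) - s" if "(x, s) \<in> G" for x s
      unfolding c_def using that sandwich G0 by (intro cSUP_least) auto
  qed
qed

text \<open>Scaling (x, s) by 1/k reduces the general inequality to the two bounds on c.\<close>
lemma dominated_extension_line:
  assumes G: "dominated_extension W S P f G" and W: "subspace W" and P: "sublinear_on W P"
    and x0: "x0 \<in> W"
    and c_lower: "\<And>x s. (x, s) \<in> G \<Longrightarrow> s - P (x - x0) \<le> c"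
    and c_upper: "\<And>x s. (x, s) \<in> G \<Longrightarrow> c \<le> P (x + x0) - s"
    and xs: "(x, s) \<in> G"
  shows "s + k * c \<le> P (x + k *\<^sub>R x0)"
proof -
  have dom: "x \<in> W" "s \<le> P x" and sub: "subspace G"
    using G xs unfolding dominated_extension_def by auto
  have Pscale: "\<And>c x. 0 \<le> c \<Longrightarrow> x \<in> W \<Longrightarrow> P (c *\<^sub>R x) = c * P x"
    using P unfolding sublinear_on_def by auto
  consider "k = 0" | "k > 0" | "k < 0" by linarith
  then show ?thesis
  proof cases
    case 1
    then show ?thesis using dom by simp
  next
    case 2
    have "(inverse k *\<^sub>R x, inverse k * s) \<in> G" using subspace_scale[OF sub xs] by simp
    from c_upper[OF this] have "k * c \<le> k * P (inverse k *\<^sub>R x + x0) - s"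
      using 2 by (simp add: field_simps)
    also have "k * P (inverse k *\<^sub>R x + x0) = P (x + k *\<^sub>R x0)"
      using 2 dom W x0 Pscale[of k "inverse k *\<^sub>R x + x0"]
      by (simp add: subspace_add subspace_scale scaleR_add_right)
    finally show ?thesis by simp
  next
    case 3
    define m where "m = - k"
    have m: "0 < m" "k = - m" using 3 by (auto simp: m_def)
    have "(inverse m *\<^sub>R x, inverse m * s) \<in> G" using subspace_scale[OF sub xs] by simp
    from c_lower[OF this] have "s + k * c \<le> m * P (inverse m *\<^sub>R x - x0)"
      using m by (simp add: field_simps)
    also have "m * P (inverse m *\<^sub>R x - x0) = P (x + k *\<^sub>R x0)"
      using m dom W x0 Pscale[of m "inverse m *\<^sub>R x - x0"]
      by (simp add: subspace_diff subspace_scale scaleR_diff_right)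
    finally show ?thesis .
  qed
qed

lemma dominated_extension_extend:
  assumes G: "dominated_extension W S P f G" and W: "subspace W" and P: "sublinear_on W P"
    and x0: "x0 \<in> W"
  obtains c where "dominated_extension W S P f (span (insert (x0, c) G))"
proof -
  obtain c where c: "\<And>x s. (x, s) \<in> G \<Longrightarrow> s - P (x - x0) \<le> c"
    "\<And>x s. (x, s) \<in> G \<Longrightarrow> c \<le> P (x + x0) - s"
    using dominated_extension_value_bounds[OF assms] by blast
  have dom: "\<And>x s. (x, s) \<in> G \<Longrightarrow> x \<in> W" and sub: "subspace G"
    and graph: "\<And>x. x \<in> S \<Longrightarrow> (x, f x) \<in> G"
    using G unfolding dominated_extension_def by auto
  have "dominated_extension W S P f (span (insert (x0, c) G))"
    unfolding dominated_extension_def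
  proof (intro conjI ballI subspace_span)
    fix z assume "z \<in> span (insert (x0, c) G)"
    moreover have "span G = G" using sub by simp
    ultimately have "\<exists>k. z - k *\<^sub>R (x0, c) \<in> G" by (simp add: span_insert)
    then obtain k where "z - k *\<^sub>R (x0, c) \<in> G" ..
    moreover obtain x s where xs_def: "z - k *\<^sub>R (x0, c) = (x, s)" by fastforce
    ultimately have xs: "(x, s) \<in> G" by simp
    have "z = (x, s) + k *\<^sub>R (x0, c)" by (simp flip: xs_def)
    then have z: "z = (x + k *\<^sub>R x0, s + k * c)" by (simp add: scaleR_Pair)
    show "case z of (x, s) \<Rightarrow> x \<in> W \<and> s \<le> P x"
      using z dominated_extension_line[OF assms c xs] dom[OF xs] W x0
      by (simp add: subspace_add subspace_scale)
  next
    fix x assume "x \<in> S"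
    then show "(x, f x) \<in> span (insert (x0, c) G)"
      by (simp add: graph span_base)
  qed
  then show ?thesis by (rule that)
qed

lemma dominated_extension_maximal:
  assumes "dominated_extension W S P f G0"
  obtains G where "dominated_extension W S P f G"
    "\<And>H. dominated_extension W S P f H \<Longrightarrow> G \<subseteq> H \<Longrightarrow> H = G"
proof -
  let ?E = "{G. dominated_extension W S P f G}"
  have "\<exists>G\<in>?E. \<forall>H\<in>?E. G \<subseteq> H \<longrightarrow> H = G"
  proof (rule Zorn_Lemma2, intro ballI)
    fix C assume "C \<in> chains ?E"
    then show "\<exists>U\<in>?E. \<forall>X\<in>C. X \<subseteq> U"
      using assms dominated_extension_Union_chain by (cases "C = {}") blast+
  qed
  then show ?thesis using that by blast
qed

theorem Hahn_Banach_sublinear: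
  assumes W: "subspace W" and S: "subspace S" "S \<subseteq> W" and f: "linear_functional_on S f"
    and P: "sublinear_on W P" and f_le_P: "\<forall>x\<in>S. f x \<le> P x"
  obtains g where "linear_functional_on W g" "\<forall>x\<in>S. g x = f x" "\<forall>x\<in>W. g x \<le> P x"
proof -
  have graph: "dominated_extension W S P f {(x, f x) | x. x \<in> S}"
    using dominated_extension_graph[OF S(1) f f_le_P S(2)] .
  obtain G where G: "dominated_extension W S P f G"
    and max: "\<And>H. dominated_extension W S P f H \<Longrightarrow> G \<subseteq> H \<Longrightarrow> H = G"
    using dominated_extension_maximal[OF graph] by blast
  have total: "\<exists>s. (x, s) \<in> G" if x: "x \<in> W" for x
  proof -
    obtain c where "dominated_extension W S P f (span (insert (x, c) G))"
      using dominated_extension_extend[OF G W P x] .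
    moreover have "G \<subseteq> span (insert (x, c) G)" by (auto intro: span_base)
    ultimately have "span (insert (x, c) G) = G" by (rule max)
    then show ?thesis by (metis insertI1 span_base)
  qed
  define g where "g x = (THE s. (x, s) \<in> G)" for x
  have g_eq: "g x = s" if "(x, s) \<in> G" for x s
    unfolding g_def using that dominated_extension_single_valued[OF G sublinear_on_zero[OF W P] _ that]
    by (rule the_equality)
  have g_graph: "(x, g x) \<in> G" if "x \<in> W" for x
    using total[OF that] g_eq by blast
  have sub: "subspace G" and dom: "\<And>x s. (x, s) \<in> G \<Longrightarrow> s \<le> P x"
    and extends: "\<And>x. x \<in> S \<Longrightarrow> (x, f x) \<in> G"
    using G unfolding dominated_extension_def by auto
  show ?thesis
  proof (rule that)
    show "linear_functional_on W g"
      unfolding linear_functional_on_def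
      using g_eq subspace_add[OF sub g_graph g_graph] subspace_scale[OF sub g_graph] by simp
    show "\<forall>x\<in>S. g x = f x" using g_eq extends by blast
    show "\<forall>x\<in>W. g x \<le> P x" using g_graph dom by blast
  qed
qed

section \<open>Extreme states of function systems on compact spaces\<close>

definition bounded_functions :: "'x set \<Rightarrow> ('x \<Rightarrow> real) set" where
  "bounded_functions K = {h. \<exists>B. \<forall>x\<in>K. \<bar>h x\<bar> \<le> B}"

lemma subspace_bounded_functions: "subspace (bounded_functions K)"
proof (rule subspaceI)
  show "0 \<in> bounded_functions K" by (auto simp: bounded_functions_def)
  show "h + k \<in> bounded_functions K" if "h \<in> bounded_functions K" "k \<in> bounded_functions K" for h k
  proof -
    from that obtain B C where "\<forall>x\<in>K. \<bar>h x\<bar> \<le> B" "\<forall>x\<in>K. \<bar>k x\<bar> \<le> C"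
      by (auto simp: bounded_functions_def)
    then have "\<forall>x\<in>K. \<bar>(h + k) x\<bar> \<le> B + C"
      by (metis abs_triangle_ineq add_mono order_trans plus_fun_apply)
    then show ?thesis by (auto simp: bounded_functions_def)
  qed
  show "c *\<^sub>R h \<in> bounded_functions K" if "h \<in> bounded_functions K" for c h
  proof -
    from that obtain B where "\<forall>x\<in>K. \<bar>h x\<bar> \<le> B" by (auto simp: bounded_functions_def)
    then have "\<forall>x\<in>K. \<bar>(c *\<^sub>R h) x\<bar> \<le> \<bar>c\<bar> * B" by (simp add: abs_mult mult_left_mono)
    then show ?thesis by (auto simp: bounded_functions_def)
  qed
qed

lemma indicator_times_bounded_functions:
  "h \<in> bounded_functions K \<Longrightarrow> indicator B * h \<in> bounded_functions K"
  unfolding bounded_functions_def by (force simp: indicator_def abs_mult)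

lemma indicator_bounded_functions: "indicator B \<in> bounded_functions K"
  unfolding bounded_functions_def by (auto intro: exI[of _ 1] simp: indicator_def)

lemma continuous_on_compact_bounded_functions:
  assumes "compact K" "continuous_on K h"
  shows "h \<in> bounded_functions K"
  using compact_imp_bounded[OF compact_continuous_image[OF assms(2,1)]]
  by (auto simp: bounded_functions_def bounded_real)

lemma positive_functional_mono:
  fixes g :: "('x \<Rightarrow> real) \<Rightarrow> real"
  assumes W: "subspace W" and g: "linear_functional_on W g"
    and pos: "\<forall>h\<in>W. (\<forall>x\<in>K. 0 \<le> h x) \<longrightarrow> 0 \<le> g h"
    and "h \<in> W" "k \<in> W" "\<forall>x\<in>K. h x \<le> k x"
  shows "g h \<le> g k"
proof -
  have "k - h \<in> W" using subspace_diff[OF W assms(5,4)] .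
  moreover have "\<forall>x\<in>K. 0 \<le> (k - h) x" using assms(6) by auto
  ultimately have "0 \<le> g (k - h)" using pos by blast
  then show ?thesis using linear_functional_on_diff[OF W g assms(5,4)] by simp
qed

text \<open>Each f in F lies between - B and B for a constant B, so positivity and d 1 = 0 force d f = 0.\<close>
lemma positive_functional_eq_zero:
  assumes F: "subspace F" "1 \<in> F" "F \<subseteq> bounded_functions K" and d: "linear_functional_on F d"
    and pos: "\<forall>h\<in>F. (\<forall>x\<in>K. 0 \<le> h x) \<longrightarrow> 0 \<le> d h" and d1: "d 1 = 0" and f: "f \<in> F"
  shows "d f = 0"
proof -
  obtain B where B: "\<forall>x\<in>K. \<bar>f x\<bar> \<le> B" using F(3) f by (auto simp: bounded_functions_def)
  have B1: "B *\<^sub>R 1 \<in> F" using F(1,2) by (rule subspace_scale)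
  have "d (- f) \<le> d (B *\<^sub>R 1)" "d f \<le> d (B *\<^sub>R 1)"
    using B B1 f subspace_neg[OF F(1) f]
    by (auto intro!: positive_functional_mono[OF F(1) d pos] simp: abs_le_iff)
  moreover have "d (B *\<^sub>R 1) = 0" "d (- f) = - d f"
    using linear_functional_on_scale[OF d F(2), of B] linear_functional_on_scale[OF d f, of "- 1"] d1
    by simp_all
  ultimately show ?thesis by simp
qed

lemma le_SUP_bounded_functions:
  assumes "h \<in> bounded_functions K" "x \<in> K"
  shows "h x \<le> (SUP x\<in>K. h x)"
proof -
  have "bdd_above (h ` K)"
    using assms(1) by (force simp: bounded_functions_def abs_le_iff intro: bdd_aboveI2)
  then show ?thesis using assms(2) by (rule cSUP_upper2) simp
qed

lemma sublinear_on_SUP: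
  assumes K: "K \<noteq> {}"
  shows "sublinear_on (bounded_functions K) (\<lambda>h. SUP x\<in>K. h x)"
proof -
  let ?W = "bounded_functions K"
  note upper = le_SUP_bounded_functions[of _ K]
  show ?thesis
    unfolding sublinear_on_def
  proof (intro conjI ballI allI impI)
    show "(SUP x\<in>K. (h + k) x) \<le> (SUP x\<in>K. h x) + (SUP x\<in>K. k x)" if "h \<in> ?W" "k \<in> ?W" for h k
      using K upper[OF that(1)] upper[OF that(2)] by (intro cSUP_least) (auto intro: add_mono)
    show "(SUP x\<in>K. (c *\<^sub>R h) x) = c * (SUP x\<in>K. h x)" if "0 \<le> c" "h \<in> ?W" for c h
    proof (cases "c = 0")
      case True
      then show ?thesis using K by simp
    next
      case False
      with that have c: "0 < c" by simp
      have "(SUP x\<in>K. (c *\<^sub>R h) x) \<le> c * (SUP x\<in>K. h x)"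
        using K c upper[OF that(2)] by (intro cSUP_least) auto
      moreover have "(SUP x\<in>K. h x) \<le> (SUP x\<in>K. (c *\<^sub>R h) x) / c"
        using K c upper[OF subspace_scale[OF subspace_bounded_functions that(2)]]
        by (intro cSUP_least) (auto simp: field_simps)
      ultimately show ?thesis using c by (simp add: field_simps)
    qed
  qed
qed

text \<open>Normalised to 0 outside F, mirroring the definition of types.\<close>
definition states :: "('x \<Rightarrow> real) set \<Rightarrow> 'x set \<Rightarrow> (('x \<Rightarrow> real) \<Rightarrow> real) set" where
  "states F K = {\<Lambda>. (\<forall>f. f \<notin> F \<longrightarrow> \<Lambda> f = 0) \<and> linear_functional_on F \<Lambda> \<and> \<Lambda> 1 = 1 \<and>
     (\<forall>f\<in>F. (\<forall>x\<in>K. 0 \<le> f x) \<longrightarrow> 0 \<le> \<Lambda> f)}"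

lemma state_le_const:
  assumes "\<Lambda> \<in> states F K" "subspace F" "1 \<in> F" "f \<in> F" "\<forall>x\<in>K. f x \<le> c"
  shows "\<Lambda> f \<le> c"
proof -
  have "c *\<^sub>R 1 - f \<in> F" using assms(2-4) by (simp add: subspace_diff subspace_scale)
  moreover have "\<forall>x\<in>K. 0 \<le> (c *\<^sub>R 1 - f) x" using assms(5) by simp
  ultimately have "0 \<le> \<Lambda> (c *\<^sub>R 1 - f)" using assms(1) by (simp add: states_def)
  also have "\<Lambda> (c *\<^sub>R 1 - f) = c - \<Lambda> f"
    using assms(1-4) linear_functional_on_diff[of F \<Lambda>] subspace_scale[OF assms(2)]
    by (simp add: states_def linear_functional_on_def)
  finally show ?thesis by simp
qed

lemma states_nonempty_domain:
  assumes "\<Lambda> \<in> states F K" "subspace F" "1 \<in> F"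
  shows "K \<noteq> {}"
proof
  assume "K = {}"
  then have "\<Lambda> 1 \<le> 0" by (intro state_le_const[OF assms assms(3)]) simp
  with assms(1) show False by (simp add: states_def)
qed

text \<open>If \<Lambda> - t q is positive then \<Lambda> = t q + (1 - t) r for a state r (or \<Lambda> = q when t = 1).\<close>
lemma extreme_state_eq_dominated:
  assumes F: "subspace F" "1 \<in> F" "F \<subseteq> bounded_functions K"
    and ext: "extreme_pt (states F K) \<Lambda>" and q: "q \<in> states F K" and t: "0 < t"
    and dom: "\<forall>f\<in>F. (\<forall>x\<in>K. 0 \<le> f x) \<longrightarrow> t * q f \<le> \<Lambda> f"
  shows "\<Lambda> = q"
proof -
  have \<Lambda>: "\<Lambda> \<in> states F K" using ext by (simp add: extreme_pt_def)
  define d where "d f = \<Lambda> f - t * q f" for f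
  have d_lin: "linear_functional_on F d"
    using \<Lambda> q by (simp add: d_def states_def linear_functional_on_def algebra_simps)
  have d_pos: "\<forall>f\<in>F. (\<forall>x\<in>K. 0 \<le> f x) \<longrightarrow> 0 \<le> d f"
    using dom by (simp add: d_def)
  have d_out: "d f = 0" if "f \<notin> F" for f
    using \<Lambda> q that by (simp add: d_def states_def)
  have d1: "d 1 = 1 - t" using \<Lambda> q by (simp add: d_def states_def)
  then have "t \<le> 1" using d_pos F(2) by force
  then consider "t = 1" | "t < 1" by linarith
  then show ?thesis
  proof cases
    case 1
    then have "d f = 0" for f
      using positive_functional_eq_zero[OF F d_lin d_pos] d1 d_out by (cases "f \<in> F") simp_all
    then show ?thesis using 1 by (auto simp: d_def fun_eq_iff)
  next
    case 2
    define r where "r f = d f / (1 - t)" for f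
    have "r \<in> states F K"
      using d_lin d_pos d_out d1 2
      by (auto simp: states_def r_def linear_functional_on_def add_divide_distrib)
    moreover have \<Lambda>_eq: "\<Lambda> = (\<lambda>f. t * q f + (1 - t) * r f)"
      using 2 by (simp add: r_def d_def fun_eq_iff)
    ultimately have "q = r" using ext q t 2 unfolding extreme_pt_def by blast
    then show ?thesis using \<Lambda>_eq by (simp add: fun_eq_iff algebra_simps)
  qed
qed

lemma state_extends_positively:
  assumes \<Lambda>: "\<Lambda> \<in> states F K" and F: "subspace F" "1 \<in> F" "F \<subseteq> bounded_functions K"
  obtains g where "linear_functional_on (bounded_functions K) g" "\<forall>f\<in>F. g f = \<Lambda> f"
    "\<forall>h\<in>bounded_functions K. (\<forall>x\<in>K. 0 \<le> h x) \<longrightarrow> 0 \<le> g h"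
proof -
  let ?W = "bounded_functions K"
  let ?P = "\<lambda>h. SUP x\<in>K. h x"
  have K: "K \<noteq> {}" using states_nonempty_domain[OF \<Lambda> F(1,2)] .
  have "\<Lambda> f \<le> ?P f" if f: "f \<in> F" for f
    using F(3) f by (intro state_le_const[OF \<Lambda> F(1,2) f] ballI le_SUP_bounded_functions) auto
  then have \<Lambda>_le: "\<forall>f\<in>F. \<Lambda> f \<le> ?P f" by blast
  have \<Lambda>_lin: "linear_functional_on F \<Lambda>" using \<Lambda> by (simp add: states_def)
  obtain g where g: "linear_functional_on ?W g" "\<forall>f\<in>F. g f = \<Lambda> f" "\<forall>h\<in>?W. g h \<le> ?P h"
    by (rule Hahn_Banach_sublinear[OF subspace_bounded_functions F(1,3) \<Lambda>_lin sublinear_on_SUP[OF K] \<Lambda>_le])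
  have "0 \<le> g h" if h: "h \<in> ?W" "\<forall>x\<in>K. 0 \<le> h x" for h
  proof -
    have "- h \<in> ?W" using subspace_neg[OF subspace_bounded_functions h(1)] .
    have "- g h = g (- h)"
      using linear_functional_on_scale[OF g(1) h(1), of "- 1"] by simp
    also have "\<dots> \<le> ?P (- h)" using g(3) \<open>- h \<in> ?W\<close> by blast
    also have "\<dots> \<le> 0" using K h(2) by (intro cSUP_least) auto
    finally show ?thesis by simp
  qed
  with g(1,2) show ?thesis using that by blast
qed

lemma restricted_state_in_states:
  assumes F: "subspace F" "F \<subseteq> bounded_functions K"
    and g: "linear_functional_on (bounded_functions K) g"
      "\<forall>h\<in>bounded_functions K. (\<forall>x\<in>K. 0 \<le> h x) \<longrightarrow> 0 \<le> g h"
    and t: "0 < g (indicator B)" and one: "1 \<in> F"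
  shows "(\<lambda>f. if f \<in> F then g (indicator B * f) / g (indicator B) else 0) \<in> states F K"
proof -
  let ?W = "bounded_functions K"
  have BW: "indicator B * f \<in> ?W" if "f \<in> F" for f
    using F(2) that indicator_times_bounded_functions by blast
  have "indicator B * (f + h) = indicator B * f + indicator B * h" for f h :: "'a \<Rightarrow> real"
    by (simp add: fun_eq_iff algebra_simps)
  moreover have "indicator B * (c *\<^sub>R f) = c *\<^sub>R (indicator B * f)" for c and f :: "'a \<Rightarrow> real"
    by (simp add: fun_eq_iff)
  ultimately show ?thesis
    using F(1) t one BW g linear_functional_on_add[OF g(1)] linear_functional_on_scale[OF g(1)]
    by (auto simp: states_def linear_functional_on_def subspace_add subspace_scale
        add_divide_distrib indicator_def)
qed

lemma restricted_functional_le: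
  assumes g: "linear_functional_on (bounded_functions K) g"
      "\<forall>h\<in>bounded_functions K. (\<forall>x\<in>K. 0 \<le> h x) \<longrightarrow> 0 \<le> g h"
    and h: "h \<in> bounded_functions K" "\<forall>x\<in>K. 0 \<le> h x"
  shows "g (indicator B * h) \<le> g h"
  using h indicator_times_bounded_functions[OF h(1)]
  by (intro positive_functional_mono[OF subspace_bounded_functions g]) (auto simp: indicator_def)

lemma restricted_functional_lower_bound:
  assumes g: "linear_functional_on (bounded_functions K) g"
      "\<forall>h\<in>bounded_functions K. (\<forall>x\<in>K. 0 \<le> h x) \<longrightarrow> 0 \<le> g h"
    and h: "h \<in> bounded_functions K" "\<forall>y\<in>K \<inter> B. c < h y"
  shows "c * g (indicator B) \<le> g (indicator B * h)"
proof -
  have "c * g (indicator B) = g (c *\<^sub>R indicator B)"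
    using linear_functional_on_scale[OF g(1) indicator_bounded_functions] by simp
  also have "\<dots> \<le> g (indicator B * h)"
  proof (rule positive_functional_mono[OF subspace_bounded_functions g])
    show "c *\<^sub>R indicator B \<in> bounded_functions K"
      by (rule subspace_scale[OF subspace_bounded_functions indicator_bounded_functions])
    show "indicator B * h \<in> bounded_functions K"
      using h(1) by (rule indicator_times_bounded_functions)
    show "\<forall>y\<in>K. (c *\<^sub>R indicator B) y \<le> (indicator B * h) y"
      using h(2) by (auto simp: indicator_def less_imp_le)
  qed
  finally show ?thesis .
qed

lemma positive_functional_cover_piece:
  assumes g: "linear_functional_on (bounded_functions K) g"
      "\<forall>h\<in>bounded_functions K. (\<forall>x\<in>K. 0 \<le> h x) \<longrightarrow> 0 \<le> g h"
    and g1: "g 1 = 1" and X: "finite X" "K \<subseteq> (\<Union>x\<in>X. U x)"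
  obtains x where "x \<in> X" "0 < g (indicator (U x))"
proof -
  have cover: "1 \<le> (\<Sum>x\<in>X. indicator (U x) y :: real)" if "y \<in> K" for y
  proof -
    obtain x where "x \<in> X" "y \<in> U x" using X(2) \<open>y \<in> K\<close> by blast
    then show ?thesis using X(1) member_le_sum[of x X "\<lambda>x. indicator (U x) y :: real"] by simp
  qed
  have "(\<Sum>x\<in>X. indicator (U x)) \<in> bounded_functions K"
    by (rule subspace_sum[OF subspace_bounded_functions]) (rule indicator_bounded_functions)
  moreover have "1 \<in> bounded_functions K" by (auto simp: bounded_functions_def intro: exI[of _ 1])
  ultimately have "g 1 \<le> g (\<Sum>x\<in>X. indicator (U x))"
    using cover by (intro positive_functional_mono[OF subspace_bounded_functions g]) (auto simp: sum_fun_apply)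
  also have "\<dots> = (\<Sum>x\<in>X. g (indicator (U x)))"
    using indicator_bounded_functions
    by (intro linear_functional_on_sum[OF subspace_bounded_functions g(1) X(1)])
  finally have mass: "1 \<le> (\<Sum>x\<in>X. g (indicator (U x)))" using g1 by simp
  show ?thesis
  proof (rule ccontr)
    assume "\<not> thesis"
    then have "(\<Sum>x\<in>X. g (indicator (U x))) \<le> 0" using that by (force intro: sum_nonpos)
    with mass show False by simp
  qed
qed

lemma strictly_separating_function:
  assumes F: "subspace F" and \<Lambda>_scale: "\<And>c f. f \<in> F \<Longrightarrow> \<Lambda> (c *\<^sub>R f) = c * \<Lambda> f"
    and f: "f \<in> F" "\<Lambda> f \<noteq> f x"
  obtains h where "h \<in> F" "\<Lambda> h < h x"
proof (cases "\<Lambda> f < f x")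
  case False
  with f(2) have "\<Lambda> ((- 1) *\<^sub>R f) < ((- 1) *\<^sub>R f) x" using \<Lambda>_scale[OF f(1), of "- 1"] by simp
  then show ?thesis using that subspace_scale[OF F f(1)] by blast
qed (use f that in blast)

text \<open>A strict separation at a point persists on a neighbourhood of it, by continuity.\<close>
lemma separating_finite_cover:
  fixes K :: "'x::topological_space set"
  assumes K: "compact K" and F: "subspace F" "\<forall>f\<in>F. continuous_on K f"
    and \<Lambda>_scale: "\<And>c f. f \<in> F \<Longrightarrow> \<Lambda> (c *\<^sub>R f) = c * \<Lambda> f"
    and not_eval: "\<forall>x\<in>K. \<exists>f\<in>F. \<Lambda> f \<noteq> f x"
  obtains X f c U where "X \<subseteq> K" "finite X" "K \<subseteq> (\<Union>x\<in>X. U x)"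
    "\<And>x. x \<in> X \<Longrightarrow> f x \<in> F \<and> \<Lambda> (f x) < c x \<and> (\<forall>y\<in>K \<inter> U x. c x < f x y)"
proof -
  have "\<exists>h\<in>F. \<Lambda> h < h x" if x: "x \<in> K" for x
  proof -
    obtain f where f: "f \<in> F" "\<Lambda> f \<noteq> f x" using not_eval x by blast
    show ?thesis using strictly_separating_function[OF F(1) \<Lambda>_scale f] by blast
  qed
  then obtain f where f: "\<And>x. x \<in> K \<Longrightarrow> f x \<in> F \<and> \<Lambda> (f x) < f x x"
    by metis
  define c where "c x = (\<Lambda> (f x) + f x x) / 2" for x
  have "\<exists>U. open U \<and> U \<inter> K = f x -` {c x<..} \<inter> K" if x: "x \<in> K" for x
  proof -
    have "continuous_on K (f x)" using F(2) f[OF x] by blast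
    then show ?thesis by (meson continuous_on_open_invariant open_greaterThan)
  qed
  then obtain U where U: "\<And>x. x \<in> K \<Longrightarrow> open (U x) \<and> U x \<inter> K = f x -` {c x<..} \<inter> K"
    by metis
  have centre: "x \<in> U x" if "x \<in> K" for x
    using U[OF that] f[OF that] that by (auto simp: c_def)
  obtain X where X: "X \<subseteq> K" "finite X" "K \<subseteq> (\<Union>x\<in>X. U x)"
  proof (rule compactE_image[OF K, of K U])
    show "open (U x)" if "x \<in> K" for x using U[OF that] by blast
    show "K \<subseteq> (\<Union>x\<in>K. U x)" using centre by blast
  qed (rule that)
  show ?thesis
  proof (rule that[OF X])
    fix x assume "x \<in> X"
    then have x: "x \<in> K" using X(1) by blast
    have "\<forall>y\<in>K \<inter> U x. c x < f x y" using U[OF x] by blast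
    moreover have "\<Lambda> (f x) < c x" using f[OF x] by (simp add: c_def)
    ultimately show "f x \<in> F \<and> \<Lambda> (f x) < c x \<and> (\<forall>y\<in>K \<inter> U x. c x < f x y)"
      using f[OF x] by blast
  qed
qed

theorem extreme_state_is_point_evaluation:
  fixes K :: "'x::topological_space set"
  assumes K: "compact K" and F: "subspace F" "1 \<in> F" "\<forall>f\<in>F. continuous_on K f"
    and ext: "extreme_pt (states F K) \<Lambda>"
  shows "\<exists>x\<in>K. \<forall>f\<in>F. \<Lambda> f = f x"
proof (rule ccontr)
  let ?W = "bounded_functions K"
  have \<Lambda>: "\<Lambda> \<in> states F K" using ext by (simp add: extreme_pt_def)
  have FW: "F \<subseteq> ?W" using F(3) continuous_on_compact_bounded_functions[OF K] by blast
  assume not_eval: "\<not> (\<exists>x\<in>K. \<forall>f\<in>F. \<Lambda> f = f x)"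
  obtain X f c U where X: "X \<subseteq> K" "finite X" "K \<subseteq> (\<Union>x\<in>X. U x)"
    and sep: "\<And>x. x \<in> X \<Longrightarrow> f x \<in> F \<and> \<Lambda> (f x) < c x \<and> (\<forall>y\<in>K \<inter> U x. c x < f x y)"
  proof (rule separating_finite_cover[OF K F(1,3)])
    show "\<Lambda> (c *\<^sub>R f) = c * \<Lambda> f" if "f \<in> F" for c f
      using \<Lambda> that by (simp add: states_def linear_functional_on_def)
    show "\<forall>x\<in>K. \<exists>f\<in>F. \<Lambda> f \<noteq> f x" using not_eval by blast
  qed (rule that)
  obtain g where g: "linear_functional_on ?W g" "\<forall>f\<in>F. g f = \<Lambda> f"
    "\<forall>h\<in>?W. (\<forall>x\<in>K. 0 \<le> h x) \<longrightarrow> 0 \<le> g h"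
    by (rule state_extends_positively[OF \<Lambda> F(1,2) FW])
  have "g 1 = 1" using g(2) \<Lambda> F(2) by (simp add: states_def)
  then obtain x0 where x0: "x0 \<in> X" "0 < g (indicator (U x0))"
    using positive_functional_cover_piece[OF g(1,3) _ X(2,3)] by blast
  define t where "t = g (indicator (U x0))"
  define q where "q h = (if h \<in> F then g (indicator (U x0) * h) / t else 0)" for h
  have "\<Lambda> = q"
  proof (rule extreme_state_eq_dominated[OF F(1,2) FW ext _ x0(2)[folded t_def]])
    show "q \<in> states F K"
      unfolding q_def t_def using restricted_state_in_states[OF F(1) FW g(1,3) x0(2) F(2)] .
    show "\<forall>h\<in>F. (\<forall>x\<in>K. 0 \<le> h x) \<longrightarrow> t * q h \<le> \<Lambda> h"
    proof (intro ballI impI)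
      fix h assume h: "h \<in> F" "\<forall>x\<in>K. 0 \<le> h x"
      then have "g (indicator (U x0) * h) \<le> g h"
        using FW by (intro restricted_functional_le[OF g(1,3)]) auto
      then show "t * q h \<le> \<Lambda> h" using x0(2) h(1) g(2) by (simp add: q_def t_def)
    qed
  qed
  have fx0: "f x0 \<in> F" "\<Lambda> (f x0) < c x0" "\<forall>y\<in>K \<inter> U x0. c x0 < f x0 y" using sep[OF x0(1)] by auto
  have "c x0 * t \<le> g (indicator (U x0) * f x0)"
    unfolding t_def using FW fx0(1,3) by (intro restricted_functional_lower_bound[OF g(1,3)]) auto
  then have "c x0 \<le> q (f x0)" using x0(2) fx0(1) by (simp add: q_def t_def field_simps)
  then show False using \<open>\<Lambda> = q\<close> fx0(2) by simp
qed

section \<open>Affine formulas as Lipschitz functions of assignments\<close>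

lemma finite_tvars: "finite (tvars t)"
  by (induction t) auto

lemma finite_fv: "finite (fv \<phi>)"
  by (induction \<phi>) (auto simp: finite_tvars)

lemma is_structure_univ:
  assumes "is_structure L M"
  shows "univ M \<noteq> {}" "\<forall>a\<in>univ M. \<forall>b\<in>univ M. dist a b \<le> 1"
  using assms by (auto simp: is_structure_def)

lemma teval_in_univ:
  assumes "is_structure L M" "\<forall>i. s i \<in> univ M" "wf_trm L t"
  shows "teval M s t \<in> univ M"
  using assms(3)
proof (induction t)
  case (Var i)
  then show ?case using assms(2) by simp
next
  case (Fn f ts)
  then have "set (map (teval M s) ts) \<subseteq> univ M" by auto
  with Fn.prems assms(1) show ?case unfolding is_structure_def by auto
qed

definition lipschitz_in_vars ::
  "'a::metric_space set \<Rightarrow> nat set \<Rightarrow> ((nat \<Rightarrow> 'a) \<Rightarrow> 'b::metric_space) \<Rightarrow> bool" where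
  "lipschitz_in_vars U V h \<longleftrightarrow> (\<exists>C\<ge>0. \<forall>s s'. (\<forall>i. s i \<in> U) \<longrightarrow> (\<forall>i. s' i \<in> U) \<longrightarrow>
     dist (h s) (h s') \<le> C * (\<Sum>i\<in>V. dist (s i) (s' i)))"

lemma lipschitz_in_varsI:
  assumes "0 \<le> C"
    and "\<And>s s'. \<forall>i. s i \<in> U \<Longrightarrow> \<forall>i. s' i \<in> U \<Longrightarrow>
      dist (h s) (h s') \<le> C * (\<Sum>i\<in>V. dist (s i) (s' i))"
  shows "lipschitz_in_vars U V h"
  using assms unfolding lipschitz_in_vars_def by blast

lemma lipschitz_in_varsE:
  assumes "lipschitz_in_vars U V h"
  obtains C where "0 \<le> C"
    "\<And>s s'. \<forall>i. s i \<in> U \<Longrightarrow> \<forall>i. s' i \<in> U \<Longrightarrow>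
      dist (h s) (h s') \<le> C * (\<Sum>i\<in>V. dist (s i) (s' i))"
  using assms unfolding lipschitz_in_vars_def by blast

lemma lipschitz_in_vars_const: "lipschitz_in_vars U V (\<lambda>s. c)"
  by (rule lipschitz_in_varsI[of 0]) auto

lemma lipschitz_in_vars_var: "lipschitz_in_vars U {i} (\<lambda>s. s i)"
  by (rule lipschitz_in_varsI[of 1]) auto

lemma lipschitz_in_vars_mono:
  assumes h: "lipschitz_in_vars U V h" and "finite V'" "V \<subseteq> V'"
  shows "lipschitz_in_vars U V' h"
proof -
  obtain C where C: "0 \<le> C" "\<And>s s'. \<forall>i. s i \<in> U \<Longrightarrow> \<forall>i. s' i \<in> U \<Longrightarrow>
      dist (h s) (h s') \<le> C * (\<Sum>i\<in>V. dist (s i) (s' i))"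
    using lipschitz_in_varsE[OF h] by blast
  show ?thesis
  proof (rule lipschitz_in_varsI[OF C(1)])
    fix s s' :: "nat \<Rightarrow> 'a" assume "\<forall>i. s i \<in> U" "\<forall>i. s' i \<in> U"
    then have "dist (h s) (h s') \<le> C * (\<Sum>i\<in>V. dist (s i) (s' i))" by (rule C(2))
    also have "\<dots> \<le> C * (\<Sum>i\<in>V'. dist (s i) (s' i))"
      using assms(2,3) C(1) by (intro mult_left_mono sum_mono2) auto
    finally show "dist (h s) (h s') \<le> C * (\<Sum>i\<in>V'. dist (s i) (s' i))" .
  qed
qed

lemma lipschitz_in_vars_add:
  fixes h k :: "(nat \<Rightarrow> 'a::metric_space) \<Rightarrow> real"
  assumes "lipschitz_in_vars U V h" "lipschitz_in_vars U V k"
  shows "lipschitz_in_vars U V (\<lambda>s. h s + k s)"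
proof -
  obtain C where C: "0 \<le> C" "\<And>s s'. \<forall>i. s i \<in> U \<Longrightarrow> \<forall>i. s' i \<in> U \<Longrightarrow>
      dist (h s) (h s') \<le> C * (\<Sum>i\<in>V. dist (s i) (s' i))"
    using lipschitz_in_varsE[OF assms(1)] by blast
  obtain D where D: "0 \<le> D" "\<And>s s'. \<forall>i. s i \<in> U \<Longrightarrow> \<forall>i. s' i \<in> U \<Longrightarrow>
      dist (k s) (k s') \<le> D * (\<Sum>i\<in>V. dist (s i) (s' i))"
    using lipschitz_in_varsE[OF assms(2)] by blast
  show ?thesis
  proof (rule lipschitz_in_varsI[of "C + D"])
    fix s s' :: "nat \<Rightarrow> 'a" assume "\<forall>i. s i \<in> U" "\<forall>i. s' i \<in> U"
    then have "dist (h s) (h s') \<le> C * (\<Sum>i\<in>V. dist (s i) (s' i))"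
      "dist (k s) (k s') \<le> D * (\<Sum>i\<in>V. dist (s i) (s' i))"
      using C(2) D(2) by blast+
    then show "dist (h s + k s) (h s' + k s') \<le> (C + D) * (\<Sum>i\<in>V. dist (s i) (s' i))"
      using dist_triangle_add[of "h s" "k s" "h s'" "k s'"] by (simp add: distrib_right)
  qed (use C D in simp)
qed

lemma lipschitz_in_vars_scale:
  fixes h :: "(nat \<Rightarrow> 'a::metric_space) \<Rightarrow> real"
  assumes "lipschitz_in_vars U V h"
  shows "lipschitz_in_vars U V (\<lambda>s. c * h s)"
proof -
  obtain C where C: "0 \<le> C" "\<And>s s'. \<forall>i. s i \<in> U \<Longrightarrow> \<forall>i. s' i \<in> U \<Longrightarrow>
      dist (h s) (h s') \<le> C * (\<Sum>i\<in>V. dist (s i) (s' i))"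
    using lipschitz_in_varsE[OF assms] by blast
  show ?thesis
  proof (rule lipschitz_in_varsI[of "\<bar>c\<bar> * C"])
    fix s s' :: "nat \<Rightarrow> 'a" assume s: "\<forall>i. s i \<in> U" "\<forall>i. s' i \<in> U"
    have "dist (c * h s) (c * h s') = \<bar>c\<bar> * dist (h s) (h s')"
      by (simp add: dist_real_def abs_mult flip: right_diff_distrib)
    also have "\<dots> \<le> \<bar>c\<bar> * (C * (\<Sum>i\<in>V. dist (s i) (s' i)))"
      using C(2) s by (intro mult_left_mono) auto
    finally show "dist (c * h s) (c * h s') \<le> \<bar>c\<bar> * C * (\<Sum>i\<in>V. dist (s i) (s' i))"
      by (simp add: mult.assoc)
  qed (use C in simp)
qed

lemma lipschitz_in_vars_dist:
  assumes "lipschitz_in_vars U V h" "lipschitz_in_vars U V k"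
  shows "lipschitz_in_vars U V (\<lambda>s. dist (h s) (k s))"
proof -
  obtain C where C: "0 \<le> C" "\<And>s s'. \<forall>i. s i \<in> U \<Longrightarrow> \<forall>i. s' i \<in> U \<Longrightarrow>
      dist (h s) (h s') \<le> C * (\<Sum>i\<in>V. dist (s i) (s' i))"
    using lipschitz_in_varsE[OF assms(1)] by blast
  obtain D where D: "0 \<le> D" "\<And>s s'. \<forall>i. s i \<in> U \<Longrightarrow> \<forall>i. s' i \<in> U \<Longrightarrow>
      dist (k s) (k s') \<le> D * (\<Sum>i\<in>V. dist (s i) (s' i))"
    using lipschitz_in_varsE[OF assms(2)] by blast
  have dist_dist: "dist (dist a b) (dist a' b') \<le> dist a a' + dist b b'" for a b a' b' :: 'b
  proof -
    have "dist a b \<le> dist a a' + dist a' b' + dist b b'" "dist a' b' \<le> dist a a' + dist a b + dist b b'"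
      by metric+
    then show ?thesis by (simp add: dist_real_def abs_le_iff)
  qed
  show ?thesis
  proof (rule lipschitz_in_varsI[of "C + D"])
    fix s s' :: "nat \<Rightarrow> 'a" assume "\<forall>i. s i \<in> U" "\<forall>i. s' i \<in> U"
    then have "dist (h s) (h s') \<le> C * (\<Sum>i\<in>V. dist (s i) (s' i))"
      "dist (k s) (k s') \<le> D * (\<Sum>i\<in>V. dist (s i) (s' i))"
      using C(2) D(2) by blast+
    then show "dist (dist (h s) (k s)) (dist (h s') (k s')) \<le> (C + D) * (\<Sum>i\<in>V. dist (s i) (s' i))"
      using dist_dist[of "h s" "k s" "h s'" "k s'"] by (simp add: distrib_right)
  qed (use C D in simp)
qed

lemma lipschitz_in_vars_list:
  fixes h :: "'t \<Rightarrow> (nat \<Rightarrow> 'a::metric_space) \<Rightarrow> 'b::metric_space"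
    and G :: "'b list \<Rightarrow> 'c::metric_space"
  assumes h: "\<And>t. t \<in> set ts \<Longrightarrow> lipschitz_in_vars U V (h t)"
    and h_in: "\<And>s t. \<forall>i. s i \<in> U \<Longrightarrow> t \<in> set ts \<Longrightarrow> h t s \<in> D"
    and G: "\<And>as bs. length as = length ts \<Longrightarrow> length bs = length ts \<Longrightarrow> set as \<subseteq> D \<Longrightarrow>
      set bs \<subseteq> D \<Longrightarrow> dist (G as) (G bs) \<le> c * list_dist as bs"
  shows "lipschitz_in_vars U V (\<lambda>s. G (map (\<lambda>t. h t s) ts))"
proof -
  have "\<forall>t\<in>set ts. \<exists>C\<ge>0. \<forall>s s'. (\<forall>i. s i \<in> U) \<longrightarrow> (\<forall>i. s' i \<in> U) \<longrightarrow>
      dist (h t s) (h t s') \<le> C * (\<Sum>i\<in>V. dist (s i) (s' i))"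
    using h unfolding lipschitz_in_vars_def by blast
  then obtain C where C: "\<And>t. t \<in> set ts \<Longrightarrow> 0 \<le> C t"
    "\<And>t s s'. t \<in> set ts \<Longrightarrow> \<forall>i. s i \<in> U \<Longrightarrow> \<forall>i. s' i \<in> U \<Longrightarrow>
      dist (h t s) (h t s') \<le> C t * (\<Sum>i\<in>V. dist (s i) (s' i))"
    by metis
  let ?C = "\<bar>c\<bar> * (\<Sum>j<length ts. C (ts ! j))"
  show ?thesis
  proof (rule lipschitz_in_varsI[of ?C])
    show "0 \<le> ?C" using C(1)[OF nth_mem] by (auto intro!: mult_nonneg_nonneg sum_nonneg)
    fix s s' :: "nat \<Rightarrow> 'a" assume s: "\<forall>i. s i \<in> U" "\<forall>i. s' i \<in> U"
    let ?d = "\<Sum>i\<in>V. dist (s i) (s' i)"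
    have "dist (G (map (\<lambda>t. h t s) ts)) (G (map (\<lambda>t. h t s') ts))
        \<le> c * list_dist (map (\<lambda>t. h t s) ts) (map (\<lambda>t. h t s') ts)"
      using s h_in by (intro G) auto
    also have "\<dots> \<le> \<bar>c\<bar> * list_dist (map (\<lambda>t. h t s) ts) (map (\<lambda>t. h t s') ts)"
      by (intro mult_right_mono) (auto simp: list_dist_def sum_nonneg)
    also have "list_dist (map (\<lambda>t. h t s) ts) (map (\<lambda>t. h t s') ts)
        = (\<Sum>j<length ts. dist (h (ts ! j) s) (h (ts ! j) s'))"
      by (simp add: list_dist_def)
    also have "\<dots> \<le> (\<Sum>j<length ts. C (ts ! j) * ?d)"
      using s by (intro sum_mono C(2)) auto
    finally show "dist (G (map (\<lambda>t. h t s) ts)) (G (map (\<lambda>t. h t s') ts)) \<le> ?C * ?d"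
      by (simp add: sum_distrib_right mult.assoc mult_left_mono)
  qed
qed

lemma teval_lipschitz:
  assumes S: "is_structure L M" and "wf_trm L t"
  shows "lipschitz_in_vars (univ M) (tvars t) (\<lambda>s. teval M s t)"
  using assms(2)
proof (induction t)
  case (Var i)
  then show ?case using lipschitz_in_vars_var by simp
next
  case (Fn f ts)
  have "lipschitz_in_vars (univ M) (tvars (Fn f ts)) (\<lambda>s. teval M s t)" if "t \<in> set ts" for t
    using Fn that by (intro lipschitz_in_vars_mono[OF _ finite_tvars]) auto
  moreover have "dist (fint M f as) (fint M f bs) \<le> flip L f * list_dist as bs"
    if "length as = length ts" "length bs = length ts" "set as \<subseteq> univ M" "set bs \<subseteq> univ M" for as bs
    using S Fn.prems that unfolding is_structure_def by auto
  ultimately have "lipschitz_in_vars (univ M) (tvars (Fn f ts)) (\<lambda>s. fint M f (map (\<lambda>t. teval M s t) ts))"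
    using teval_in_univ[OF S] Fn.prems
    by (intro lipschitz_in_vars_list[where D = "univ M" and c = "flip L f"]) auto
  then show ?case by simp
qed

lemma lipschitz_in_vars_bounded:
  fixes h :: "(nat \<Rightarrow> 'a::metric_space) \<Rightarrow> real"
  assumes h: "lipschitz_in_vars U V h" and V: "finite V"
    and U: "U \<noteq> {}" "\<forall>a\<in>U. \<forall>b\<in>U. dist a b \<le> 1"
  obtains B where "\<And>s. \<forall>i. s i \<in> U \<Longrightarrow> \<bar>h s\<bar> \<le> B"
proof -
  obtain C where C: "0 \<le> C" "\<And>s s'. \<forall>i. s i \<in> U \<Longrightarrow> \<forall>i. s' i \<in> U \<Longrightarrow>
      dist (h s) (h s') \<le> C * (\<Sum>i\<in>V. dist (s i) (s' i))"
    using lipschitz_in_varsE[OF h] by blast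
  obtain a0 where a0: "a0 \<in> U" using U(1) by blast
  have "\<bar>h s\<bar> \<le> \<bar>h (\<lambda>_. a0)\<bar> + C * card V" if s: "\<forall>i. s i \<in> U" for s
  proof -
    have "(\<Sum>i\<in>V. dist (s i) a0) \<le> card V"
      using sum_bounded_above[of V "\<lambda>i. dist (s i) a0" 1] s a0 U(2) by simp
    then have "dist (h s) (h (\<lambda>_. a0)) \<le> C * card V"
      using C s a0 by (meson mult_left_mono order_trans)
    then show ?thesis by (simp add: dist_real_def)
  qed
  then show ?thesis using that by blast
qed

lemma abs_cSUP_diff_le:
  fixes f g :: "'b \<Rightarrow> real"
  assumes "A \<noteq> {}" "bdd_above (f ` A)" "\<And>a. a \<in> A \<Longrightarrow> \<bar>f a - g a\<bar> \<le> e"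
  shows "\<bar>(SUP a\<in>A. f a) - (SUP a\<in>A. g a)\<bar> \<le> e"
proof -
  have g_le: "g a \<le> f a + e" if "a \<in> A" for a using assms(3)[OF that] by linarith
  obtain m where m: "\<And>a. a \<in> A \<Longrightarrow> f a \<le> m" using assms(2) by (auto simp: bdd_above_def)
  have bdd_g: "bdd_above (g ` A)"
  proof (rule bdd_aboveI2)
    show "g a \<le> m + e" if "a \<in> A" for a using g_le[OF that] m[OF that] by linarith
  qed
  have "(SUP a\<in>A. g a) \<le> (SUP a\<in>A. f a) + e"
  proof (rule cSUP_least[OF assms(1)])
    fix a assume a: "a \<in> A"
    show "g a \<le> (SUP a\<in>A. f a) + e" using cSUP_upper[OF a assms(2)] g_le[OF a] by linarith
  qed
  moreover have "(SUP a\<in>A. f a) \<le> (SUP a\<in>A. g a) + e"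
  proof (rule cSUP_least[OF assms(1)])
    fix a assume a: "a \<in> A"
    show "f a \<le> (SUP a\<in>A. g a) + e" using cSUP_upper[OF a bdd_g] assms(3)[OF a] by linarith
  qed
  ultimately show ?thesis by (simp add: abs_le_iff)
qed

lemma sum_dist_fun_upd:
  assumes "finite V"
  shows "(\<Sum>i\<in>V. dist ((s(x := a)) i) ((s'(x := a)) i)) = (\<Sum>i\<in>V - {x}. dist (s i) (s' i))"
proof -
  have "(\<Sum>i\<in>V. dist ((s(x := a)) i) ((s'(x := a)) i)) = (\<Sum>i\<in>V - {x}. dist ((s(x := a)) i) ((s'(x := a)) i))"
    using assms by (intro sum.mono_neutral_right) auto
  also have "\<dots> = (\<Sum>i\<in>V - {x}. dist (s i) (s' i))" by (intro sum.cong) auto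
  finally show ?thesis .
qed

lemma lipschitz_in_vars_SUP:
  fixes h :: "(nat \<Rightarrow> 'a::metric_space) \<Rightarrow> real"
  assumes h: "lipschitz_in_vars U V h" and V: "finite V"
    and U: "U \<noteq> {}" "\<forall>a\<in>U. \<forall>b\<in>U. dist a b \<le> 1"
  shows "lipschitz_in_vars U (V - {x}) (\<lambda>s. SUP a\<in>U. h (s(x := a)))"
proof -
  obtain C where C: "0 \<le> C" "\<And>s s'. \<forall>i. s i \<in> U \<Longrightarrow> \<forall>i. s' i \<in> U \<Longrightarrow>
      dist (h s) (h s') \<le> C * (\<Sum>i\<in>V. dist (s i) (s' i))"
    using lipschitz_in_varsE[OF h] by blast
  obtain B where B: "\<And>s. \<forall>i. s i \<in> U \<Longrightarrow> \<bar>h s\<bar> \<le> B"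
    using lipschitz_in_vars_bounded[OF h V U] by blast
  show ?thesis
  proof (rule lipschitz_in_varsI[OF C(1)])
    fix s s' :: "nat \<Rightarrow> 'a" assume s: "\<forall>i. s i \<in> U" "\<forall>i. s' i \<in> U"
    have "bdd_above ((\<lambda>a. h (s(x := a))) ` U)"
      using B s by (intro bdd_aboveI2[where M = B]) (auto simp: abs_le_iff)
    moreover have "\<bar>h (s(x := a)) - h (s'(x := a))\<bar> \<le> C * (\<Sum>i\<in>V - {x}. dist (s i) (s' i))"
      if "a \<in> U" for a
    proof -
      have "\<forall>i. (s(x := a)) i \<in> U" "\<forall>i. (s'(x := a)) i \<in> U" using s that by auto
      from C(2)[OF this] show ?thesis unfolding sum_dist_fun_upd[OF V] dist_real_def .
    qed
    ultimately show "dist (SUP a\<in>U. h (s(x := a))) (SUP a\<in>U. h (s'(x := a)))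
        \<le> C * (\<Sum>i\<in>V - {x}. dist (s i) (s' i))"
      unfolding dist_real_def by (rule abs_cSUP_diff_le[OF U(1)])
  qed
qed

lemma INF_eq_uminus_SUP_real: "(INF a\<in>A. f a) = - (SUP a\<in>A. - f a :: real)"
  by (simp add: Inf_real_def image_comp)

lemma eval_lipschitz:
  assumes S: "is_structure L M" and "wf_fml L \<phi>"
  shows "lipschitz_in_vars (univ M) (fv \<phi>) (\<lambda>s. eval M s \<phi>)"
  using assms(2)
proof (induction \<phi>)
  case One
  then show ?case by (simp add: lipschitz_in_vars_const)
next
  case (Dist t1 t2)
  have "lipschitz_in_vars (univ M) (tvars t1 \<union> tvars t2) (\<lambda>s. teval M s t)" if "t \<in> {t1, t2}" for t
    using Dist.prems that
    by (intro lipschitz_in_vars_mono[OF teval_lipschitz[OF S]]) (auto simp: finite_tvars)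
  then show ?case by (simp add: lipschitz_in_vars_dist)
next
  case (Rel R ts)
  have "lipschitz_in_vars (univ M) (fv (Rel R ts)) (\<lambda>s. teval M s t)" if "t \<in> set ts" for t
    using Rel that teval_lipschitz[OF S] by (intro lipschitz_in_vars_mono[OF _ finite_fv]) auto
  moreover have "dist (rint M R as) (rint M R bs) \<le> rlip L R * list_dist as bs"
    if "length as = length ts" "length bs = length ts" "set as \<subseteq> univ M" "set bs \<subseteq> univ M" for as bs
    using S Rel.prems that unfolding is_structure_def dist_real_def by auto
  ultimately have "lipschitz_in_vars (univ M) (fv (Rel R ts)) (\<lambda>s. rint M R (map (\<lambda>t. teval M s t) ts))"
    using teval_in_univ[OF S] Rel.prems
    by (intro lipschitz_in_vars_list[where D = "univ M" and c = "rlip L R"]) auto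
  then show ?case by simp
next
  case (Plus \<phi> \<psi>)
  have "lipschitz_in_vars (univ M) (fv \<phi> \<union> fv \<psi>) (\<lambda>s. eval M s \<phi>)"
    using Plus by (intro lipschitz_in_vars_mono[OF Plus.IH(1)]) (auto simp: finite_fv)
  moreover have "lipschitz_in_vars (univ M) (fv \<phi> \<union> fv \<psi>) (\<lambda>s. eval M s \<psi>)"
    using Plus by (intro lipschitz_in_vars_mono[OF Plus.IH(2)]) (auto simp: finite_fv)
  ultimately show ?case by (simp add: lipschitz_in_vars_add)
next
  case (Scale r \<phi>)
  then show ?case by (simp add: lipschitz_in_vars_scale)
next
  case (Sup x \<phi>)
  then show ?case
    using lipschitz_in_vars_SUP[OF Sup.IH finite_fv is_structure_univ[OF S]] by (simp add: fun_upd_def)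
next
  case (Inf x \<phi>)
  then have "lipschitz_in_vars (univ M) (fv \<phi> - {x}) (\<lambda>s. SUP a\<in>univ M. - eval M (s(x := a)) \<phi>)"
    using lipschitz_in_vars_SUP[OF lipschitz_in_vars_scale[OF Inf.IH, of "- 1"] finite_fv
        is_structure_univ[OF S]]
    by (simp add: fun_upd_def)
  then show ?case
    using lipschitz_in_vars_scale[of _ _ _ "- 1"] by (simp add: INF_eq_uminus_SUP_real)
qed

lemma lipschitz_in_vars_continuous_on:
  fixes h :: "(nat \<Rightarrow> 'a::metric_space) \<Rightarrow> 'b::metric_space"
  assumes h: "lipschitz_in_vars U V h"
  shows "continuous_on {s. \<forall>i. s i \<in> U} h"
  unfolding continuous_on_def
proof (intro ballI)
  obtain C where C: "0 \<le> C" "\<And>s s'. \<forall>i. s i \<in> U \<Longrightarrow> \<forall>i. s' i \<in> U \<Longrightarrow>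
      dist (h s) (h s') \<le> C * (\<Sum>i\<in>V. dist (s i) (s' i))"
    using lipschitz_in_varsE[OF h] by blast
  fix s :: "nat \<Rightarrow> 'a" assume s: "s \<in> {s. \<forall>i. s i \<in> U}"
  let ?A = "{s. \<forall>i. s i \<in> U}"
  let ?bound = "\<lambda>s'. C * (\<Sum>i\<in>V. dist (s' i) (s i))"
  have "continuous_on UNIV ?bound"
    by (intro continuous_intros continuous_on_product_coordinates)
  then have "(?bound \<longlongrightarrow> ?bound s) (at s)" unfolding continuous_on_def by blast
  then have bound: "(?bound \<longlongrightarrow> 0) (at s within ?A)"
    using tendsto_within_subset[of ?bound _ s UNIV ?A] by simp
  have upper: "\<forall>\<^sub>F s' in at s within ?A. dist (h s') (h s) \<le> ?bound s'"
    unfolding eventually_at_filter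
  proof (intro always_eventually allI impI)
    fix s' assume "s' \<noteq> s" "s' \<in> ?A"
    then have "\<forall>i. s' i \<in> U" "\<forall>i. s i \<in> U" using s by auto
    then show "dist (h s') (h s) \<le> ?bound s'" by (rule C(2))
  qed
  have lower: "\<forall>\<^sub>F s' in at s within ?A. 0 \<le> dist (h s') (h s)" by simp
  have "((\<lambda>s'. dist (h s') (h s)) \<longlongrightarrow> 0) (at s within ?A)"
    by (rule tendsto_sandwich[OF lower upper tendsto_const bound])
  then show "(h \<longlongrightarrow> h s) (at s within ?A)" by (rule iffD2[OF tendsto_dist_iff])
qed

lemma compact_assignments:
  assumes "compact U"
  shows "compact {s :: nat \<Rightarrow> 'a::topological_space. \<forall>i. s i \<in> U}"
proof -
  have "compactin (product_topology (\<lambda>i::nat. euclidean) UNIV) (PiE UNIV (\<lambda>i. U))"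
    using assms by (simp add: compactin_PiE)
  moreover have "PiE UNIV (\<lambda>i::nat. U) = {s. \<forall>i. s i \<in> U}"
    by (auto simp: PiE_UNIV_domain)
  ultimately show ?thesis by (simp add: euclidean_product_topology)
qed

lemma eval_bounded:
  assumes S: "is_structure L M" and "wf_fml L \<phi>"
  obtains B where "\<And>s. \<forall>i. s i \<in> univ M \<Longrightarrow> \<bar>eval M s \<phi>\<bar> \<le> B"
  using lipschitz_in_vars_bounded[OF eval_lipschitz[OF assms] finite_fv is_structure_univ[OF S]]
  by blast

lemma eval_Inf_nonneg_iff:
  assumes S: "is_structure L M" and "wf_fml L \<phi>" and s: "\<forall>i. s i \<in> univ M"
  shows "0 \<le> eval M s (Inf x \<phi>) \<longleftrightarrow> (\<forall>a\<in>univ M. 0 \<le> eval M (s(x := a)) \<phi>)"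
proof -
  obtain B where B: "\<And>s. \<forall>i. s i \<in> univ M \<Longrightarrow> \<bar>eval M s \<phi>\<bar> \<le> B"
    using eval_bounded[OF assms(1,2)] by blast
  have "bdd_below ((\<lambda>a. eval M (s(x := a)) \<phi>) ` univ M)"
  proof (rule bdd_belowI2)
    fix a assume "a \<in> univ M"
    then have "\<forall>i. (s(x := a)) i \<in> univ M" using s by simp
    from B[OF this] show "- B \<le> eval M (s(x := a)) \<phi>" by (simp add: abs_le_iff fun_upd_def)
  qed
  then show ?thesis using is_structure_univ[OF S] by (simp add: le_cINF_iff)
qed

lemma eval_infs_nonneg_iff:
  assumes S: "is_structure L M" and "wf_fml L \<phi>" and "\<forall>i. s i \<in> univ M"
  shows "0 \<le> eval M s (infs n \<phi>) \<longleftrightarrow>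
    (\<forall>a. (\<forall>i. a i \<in> univ M) \<longrightarrow> (\<forall>i\<ge>n. a i = s i) \<longrightarrow> 0 \<le> eval M a \<phi>)"
  using assms(2,3)
proof (induction n arbitrary: \<phi>)
  case 0
  then show ?case by (auto simp: fun_eq_iff)
next
  case (Suc n)
  let ?A = "{a. \<forall>i. a i \<in> univ M}"
  have "0 \<le> eval M s (infs (Suc n) \<phi>) \<longleftrightarrow>
      (\<forall>a\<in>?A. (\<forall>i\<ge>n. a i = s i) \<longrightarrow> 0 \<le> eval M a (Inf n \<phi>))"
    using Suc by simp
  also have "\<dots> \<longleftrightarrow> (\<forall>a\<in>?A. (\<forall>i\<ge>n. a i = s i) \<longrightarrow> (\<forall>b\<in>univ M. 0 \<le> eval M (a(n := b)) \<phi>))"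
    using eval_Inf_nonneg_iff[OF S Suc.prems(1)] by auto
  also have "\<dots> \<longleftrightarrow> (\<forall>a\<in>?A. (\<forall>i\<ge>Suc n. a i = s i) \<longrightarrow> 0 \<le> eval M a \<phi>)"
  proof
    assume H: "\<forall>a\<in>?A. (\<forall>i\<ge>n. a i = s i) \<longrightarrow> (\<forall>b\<in>univ M. 0 \<le> eval M (a(n := b)) \<phi>)"
    show "\<forall>a\<in>?A. (\<forall>i\<ge>Suc n. a i = s i) \<longrightarrow> 0 \<le> eval M a \<phi>"
    proof (intro ballI impI)
      fix a assume a: "a \<in> ?A" "\<forall>i\<ge>Suc n. a i = s i"
      have "a(n := s n) \<in> ?A" "\<forall>i\<ge>n. (a(n := s n)) i = s i"
        using a Suc.prems(2) by (auto simp: Suc_le_eq)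
      moreover have "a n \<in> univ M" using a(1) by simp
      ultimately have "0 \<le> eval M ((a(n := s n))(n := a n)) \<phi>" using H by blast
      then show "0 \<le> eval M a \<phi>" by simp
    qed
  next
    assume H: "\<forall>a\<in>?A. (\<forall>i\<ge>Suc n. a i = s i) \<longrightarrow> 0 \<le> eval M a \<phi>"
    show "\<forall>a\<in>?A. (\<forall>i\<ge>n. a i = s i) \<longrightarrow> (\<forall>b\<in>univ M. 0 \<le> eval M (a(n := b)) \<phi>)"
      using H by auto
  qed
  finally show ?case by simp
qed

lemma fv_infs: "fv (infs n \<phi>) = fv \<phi> - {..<n}"
  by (induction n arbitrary: \<phi>) (auto simp: lessThan_Suc)

lemma wf_fml_infs: "wf_fml L (infs n \<phi>) = wf_fml L \<phi>"
  by (induction n arbitrary: \<phi>) auto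

lemma T_nonneg_iff:
  assumes M: "models L M T" and \<phi>: "\<phi> \<in> fmls L n"
  shows "T_nonneg T n \<phi> \<longleftrightarrow> (\<forall>s. (\<forall>i. s i \<in> univ M) \<longrightarrow> 0 \<le> eval M s \<phi>)"
proof -
  have S: "is_structure L M" using M by (simp add: models_def)
  have wf: "wf_fml L \<phi>" using \<phi> by (simp add: fmls_def)
  have "infs n \<phi> \<in> sentences L"
    using \<phi> by (auto simp: sentences_def fmls_def fv_infs wf_fml_infs)
  then have T_eq: "T (infs n \<phi>) = eval M s (infs n \<phi>)" if "\<forall>i. s i \<in> univ M" for s
    using M that by (simp add: models_def)
  obtain a0 where a0: "a0 \<in> univ M" using is_structure_univ[OF S] by blast
  show ?thesis
    unfolding T_nonneg_def
  proof (intro iffI allI impI)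
    fix s :: "nat \<Rightarrow> _" assume "0 \<le> T (infs n \<phi>)" and s: "\<forall>i. s i \<in> univ M"
    then have "0 \<le> eval M s (infs n \<phi>)" using T_eq[OF s] by simp
    then show "0 \<le> eval M s \<phi>" using eval_infs_nonneg_iff[OF S wf s] s by blast
  next
    assume "\<forall>s. (\<forall>i. s i \<in> univ M) \<longrightarrow> 0 \<le> eval M s \<phi>"
    moreover have a0s: "\<forall>i. (\<lambda>_. a0) i \<in> univ M" using a0 by simp
    ultimately have "0 \<le> eval M (\<lambda>_. a0) (infs n \<phi>)" using eval_infs_nonneg_iff[OF S wf a0s] by blast
    then show "0 \<le> T (infs n \<phi>)" using T_eq[OF a0s] by simp
  qed
qed

section \<open>Types as states of the definable functions\<close>

lemma fmls_simps [simp]: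
  "One \<in> fmls L n"
  "Plus \<phi> \<psi> \<in> fmls L n \<longleftrightarrow> \<phi> \<in> fmls L n \<and> \<psi> \<in> fmls L n"
  "Scale r \<phi> \<in> fmls L n \<longleftrightarrow> \<phi> \<in> fmls L n"
  by (auto simp: fmls_def)

definition definable_functions ::
  "('f, 'r, 'z) lang_scheme \<Rightarrow> ('a::metric_space, 'f, 'r, 'w) struc_scheme \<Rightarrow> nat \<Rightarrow> ((nat \<Rightarrow> 'a) \<Rightarrow> real) set" where
  "definable_functions L M n = (\<lambda>\<phi> s. eval M s \<phi>) ` fmls L n"

lemma subspace_definable_functions: "subspace (definable_functions L M n)"
proof (rule subspaceI)
  have "(\<lambda>s. eval M s (Scale 0 One)) = 0" by (simp add: fun_eq_iff)
  then show "0 \<in> definable_functions L M n"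
    unfolding definable_functions_def by (metis fmls_simps(1,3) image_eqI)
  show "f + h \<in> definable_functions L M n"
    if "f \<in> definable_functions L M n" "h \<in> definable_functions L M n" for f h
  proof -
    from that obtain \<phi> \<psi> where "\<phi> \<in> fmls L n" "\<psi> \<in> fmls L n"
      "f = (\<lambda>s. eval M s \<phi>)" "h = (\<lambda>s. eval M s \<psi>)"
      by (auto simp: definable_functions_def)
    then show ?thesis
      unfolding definable_functions_def by (intro image_eqI[of _ _ "Plus \<phi> \<psi>"]) (auto simp: fun_eq_iff)
  qed
  show "c *\<^sub>R f \<in> definable_functions L M n" if "f \<in> definable_functions L M n" for c f
  proof -
    from that obtain \<phi> where "\<phi> \<in> fmls L n" "f = (\<lambda>s. eval M s \<phi>)"
      by (auto simp: definable_functions_def)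
    then show ?thesis
      unfolding definable_functions_def by (intro image_eqI[of _ _ "Scale c \<phi>"]) (auto simp: fun_eq_iff)
  qed
qed

lemma one_definable_functions: "1 \<in> definable_functions L M n"
  unfolding definable_functions_def by (intro image_eqI[of _ _ One]) (auto simp: fun_eq_iff)

lemma continuous_on_definable_functions:
  assumes "is_structure L M" "f \<in> definable_functions L M n"
  shows "continuous_on {s. \<forall>i. s i \<in> univ M} f"
  using assms eval_lipschitz lipschitz_in_vars_continuous_on
  by (fastforce simp: definable_functions_def fmls_def)

lemma type_eval_nonneg:
  assumes "models L M T" "p \<in> types L T n" "\<phi> \<in> fmls L n"
    and "\<forall>s. (\<forall>i. s i \<in> univ M) \<longrightarrow> 0 \<le> eval M s \<phi>"
  shows "0 \<le> p \<phi>"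
  using assms T_nonneg_iff[OF assms(1,3)] by (simp add: types_def)

lemma type_respects_eval:
  assumes M: "models L M T" and p: "p \<in> types L T n" and "\<phi> \<in> fmls L n" "\<psi> \<in> fmls L n"
    and eq: "\<forall>s. (\<forall>i. s i \<in> univ M) \<longrightarrow> eval M s \<phi> = eval M s \<psi>"
  shows "p \<phi> = p \<psi>"
proof -
  have "0 \<le> p (Plus \<phi> (Scale (- 1) \<psi>))" "0 \<le> p (Plus \<psi> (Scale (- 1) \<phi>))"
    using assms by (auto intro!: type_eval_nonneg[OF M p])
  then show ?thesis using p assms(3,4) by (simp add: types_def)
qed

text \<open>The choice of a defining formula is irrelevant by type_respects_eval.\<close>
definition state_of_type ::
  "('f, 'r, 'z) lang_scheme \<Rightarrow> ('a::metric_space, 'f, 'r, 'w) struc_scheme \<Rightarrow> nat \<Rightarrow>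
    (('f, 'r) fml \<Rightarrow> real) \<Rightarrow> ((nat \<Rightarrow> 'a) \<Rightarrow> real) \<Rightarrow> real" where
  "state_of_type L M n p f = (if f \<in> definable_functions L M n
     then p (SOME \<phi>. \<phi> \<in> fmls L n \<and> f = (\<lambda>s. eval M s \<phi>)) else 0)"

definition type_of_state ::
  "('f, 'r, 'z) lang_scheme \<Rightarrow> ('a::metric_space, 'f, 'r, 'w) struc_scheme \<Rightarrow> nat \<Rightarrow>
    (((nat \<Rightarrow> 'a) \<Rightarrow> real) \<Rightarrow> real) \<Rightarrow> ('f, 'r) fml \<Rightarrow> real" where
  "type_of_state L M n \<Lambda> \<phi> = (if \<phi> \<in> fmls L n then \<Lambda> (\<lambda>s. eval M s \<phi>) else 0)"

lemma state_of_type_eval: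
  assumes M: "models L M T" and p: "p \<in> types L T n" and \<phi>: "\<phi> \<in> fmls L n"
  shows "state_of_type L M n p (\<lambda>s. eval M s \<phi>) = p \<phi>"
proof -
  define \<psi> where "\<psi> = (SOME \<psi>. \<psi> \<in> fmls L n \<and> (\<lambda>s. eval M s \<phi>) = (\<lambda>s. eval M s \<psi>))"
  have \<psi>: "\<psi> \<in> fmls L n" "(\<lambda>s. eval M s \<phi>) = (\<lambda>s. eval M s \<psi>)"
    unfolding \<psi>_def using someI_ex[of "\<lambda>\<psi>. \<psi> \<in> fmls L n \<and> (\<lambda>s. eval M s \<phi>) = (\<lambda>s. eval M s \<psi>)"] \<phi>
    by blast+
  from \<psi>(2) have "\<forall>s. (\<forall>i. s i \<in> univ M) \<longrightarrow> eval M s \<phi> = eval M s \<psi>" by (simp add: fun_eq_iff)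
  then have "p \<psi> = p \<phi>" using type_respects_eval[OF M p \<phi> \<psi>(1)] by simp
  then show ?thesis using \<phi> by (simp add: state_of_type_def definable_functions_def \<psi>_def)
qed

lemma state_of_type_in_states:
  assumes M: "models L M T" and p: "p \<in> types L T n"
  shows "state_of_type L M n p \<in> states (definable_functions L M n) {s. \<forall>i. s i \<in> univ M}"
  unfolding states_def linear_functional_on_def
proof (intro CollectI conjI allI impI ballI)
  let ?F = "definable_functions L M n"
  have evalF: "\<exists>\<phi>\<in>fmls L n. f = (\<lambda>s. eval M s \<phi>)" if "f \<in> ?F" for f
    using that by (auto simp: definable_functions_def)
  note val = state_of_type_eval[OF M p]
  have p_lin: "p (Plus \<phi> \<psi>) = p \<phi> + p \<psi>" "p (Scale c \<phi>) = c * p \<phi>"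
    if "\<phi> \<in> fmls L n" "\<psi> \<in> fmls L n" for \<phi> \<psi> c
    using p that by (simp_all add: types_def)
  show "state_of_type L M n p f = 0" if "f \<notin> ?F" for f
    using that by (simp add: state_of_type_def)
  show "state_of_type L M n p (f + h) = state_of_type L M n p f + state_of_type L M n p h"
    if f: "f \<in> ?F" and h: "h \<in> ?F" for f h
  proof -
    obtain \<phi> where "\<phi> \<in> fmls L n" "f = (\<lambda>s. eval M s \<phi>)" using evalF f by blast
    moreover obtain \<psi> where "\<psi> \<in> fmls L n" "h = (\<lambda>s. eval M s \<psi>)" using evalF h by blast
    ultimately show ?thesis using val[of "Plus \<phi> \<psi>"] val p_lin by (simp add: plus_fun_def)
  qed
  show "state_of_type L M n p (c *\<^sub>R f) = c * state_of_type L M n p f" if f: "f \<in> ?F" for c f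
  proof -
    obtain \<phi> where "\<phi> \<in> fmls L n" "f = (\<lambda>s. eval M s \<phi>)" using evalF f by blast
    then show ?thesis using val[of "Scale c \<phi>"] val p_lin by (simp add: scaleR_fun_def)
  qed
  show "state_of_type L M n p 1 = 1"
    using val[of One] p by (simp add: types_def one_fun_def)
  show "0 \<le> state_of_type L M n p f" if f: "f \<in> ?F" "\<forall>s\<in>{s. \<forall>i. s i \<in> univ M}. 0 \<le> f s" for f
  proof -
    obtain \<phi> where "\<phi> \<in> fmls L n" "f = (\<lambda>s. eval M s \<phi>)" using evalF f(1) by blast
    then show ?thesis using f(2) val type_eval_nonneg[OF M p] by simp
  qed
qed

lemma type_of_state_in_types:
  assumes M: "models L M T" and \<Lambda>: "\<Lambda> \<in> states (definable_functions L M n) {s. \<forall>i. s i \<in> univ M}"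
  shows "type_of_state L M n \<Lambda> \<in> types L T n"
  unfolding types_def
proof (intro CollectI conjI allI impI ballI)
  let ?F = "definable_functions L M n"
  have inF: "(\<lambda>s. eval M s \<phi>) \<in> ?F" if "\<phi> \<in> fmls L n" for \<phi>
    using that by (simp add: definable_functions_def)
  have \<Lambda>_lin: "linear_functional_on ?F \<Lambda>" and \<Lambda>1: "\<Lambda> 1 = 1"
    and \<Lambda>_pos: "\<forall>f\<in>?F. (\<forall>s\<in>{s. \<forall>i. s i \<in> univ M}. 0 \<le> f s) \<longrightarrow> 0 \<le> \<Lambda> f"
    using \<Lambda> by (simp_all add: states_def)
  show "type_of_state L M n \<Lambda> \<phi> = 0" if "\<phi> \<notin> fmls L n" for \<phi>
    using that by (simp add: type_of_state_def)
  show "type_of_state L M n \<Lambda> One = 1"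
    using \<Lambda>1 by (simp add: type_of_state_def one_fun_def)
  show "type_of_state L M n \<Lambda> (Plus \<phi> \<psi>) = type_of_state L M n \<Lambda> \<phi> + type_of_state L M n \<Lambda> \<psi>"
    if "\<phi> \<in> fmls L n" "\<psi> \<in> fmls L n" for \<phi> \<psi>
    using that linear_functional_on_add[OF \<Lambda>_lin inF inF]
    by (simp add: type_of_state_def plus_fun_def)
  show "type_of_state L M n \<Lambda> (Scale r \<phi>) = r * type_of_state L M n \<Lambda> \<phi>" if "\<phi> \<in> fmls L n" for r \<phi>
    using that linear_functional_on_scale[OF \<Lambda>_lin inF]
    by (simp add: type_of_state_def scaleR_fun_def)
  show "0 \<le> type_of_state L M n \<Lambda> \<phi>" if "\<phi> \<in> fmls L n" "T_nonneg T n \<phi>" for \<phi>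
    using that \<Lambda>_pos inF T_nonneg_iff[OF M] by (simp add: type_of_state_def)
qed

lemma type_of_state_of_type:
  assumes "models L M T" "p \<in> types L T n"
  shows "type_of_state L M n (state_of_type L M n p) = p"
  using assms state_of_type_eval[OF assms]
  by (auto simp: fun_eq_iff type_of_state_def types_def)

lemma extreme_state_of_extreme_type:
  assumes M: "models L M T" and p: "p \<in> extreme_types L T n"
  shows "extreme_pt (states (definable_functions L M n) {s. \<forall>i. s i \<in> univ M}) (state_of_type L M n p)"
  unfolding extreme_pt_def
proof (intro conjI ballI allI impI)
  let ?S = "states (definable_functions L M n) {s. \<forall>i. s i \<in> univ M}"
  have pT: "p \<in> types L T n" using p by (simp add: extreme_types_def extreme_pt_def)
  show "state_of_type L M n p \<in> ?S" by (rule state_of_type_in_states[OF M pT])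
  fix \<Lambda>1 \<Lambda>2 t assume \<Lambda>: "\<Lambda>1 \<in> ?S" "\<Lambda>2 \<in> ?S"
    and t: "0 < t \<and> t < 1 \<and> state_of_type L M n p = (\<lambda>f. t * \<Lambda>1 f + (1 - t) * \<Lambda>2 f)"
  have "p = type_of_state L M n (state_of_type L M n p)"
    using type_of_state_of_type[OF M pT] by simp
  also have "\<dots> = (\<lambda>\<phi>. t * type_of_state L M n \<Lambda>1 \<phi> + (1 - t) * type_of_state L M n \<Lambda>2 \<phi>)"
    using t by (simp add: fun_eq_iff type_of_state_def)
  finally have types_eq: "type_of_state L M n \<Lambda>1 = type_of_state L M n \<Lambda>2"
    using p t type_of_state_in_types[OF M] \<Lambda>
    unfolding extreme_types_def extreme_pt_def by blast
  have eq: "\<Lambda>1 (\<lambda>s. eval M s \<phi>) = \<Lambda>2 (\<lambda>s. eval M s \<phi>)" if "\<phi> \<in> fmls L n" for \<phi>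
    using fun_cong[OF types_eq, of \<phi>] that by (simp add: type_of_state_def)
  have "\<Lambda>1 f = \<Lambda>2 f" for f
  proof (cases "f \<in> definable_functions L M n")
    case True
    then show ?thesis using eq by (auto simp: definable_functions_def)
  next
    case False
    then show ?thesis using \<Lambda> by (simp add: states_def)
  qed
  then show "\<Lambda>1 = \<Lambda>2" by blast
qed

theorem mainTheorem18:
  fixes L :: "('f, 'r) lang"
    and T :: "('f, 'r) fml \<Rightarrow> real"
    and M :: "('a::metric_space, 'f, 'r) struc"
    and n :: nat
    and p :: "('f, 'r) fml \<Rightarrow> real"
  assumes "models L M T"
    and "compact (univ M)"
    and "p \<in> extreme_types L T n"
  shows "\<exists>a. realizes L M n a p"
proof -
  have S: "is_structure L M" using assms(1) by (simp add: models_def)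
  obtain a where a: "a \<in> {s. \<forall>i. s i \<in> univ M}"
    and eval: "\<forall>f\<in>definable_functions L M n. state_of_type L M n p f = f a"
    using extreme_state_is_point_evaluation[OF compact_assignments[OF assms(2)]
        subspace_definable_functions one_definable_functions _
        extreme_state_of_extreme_type[OF assms(1,3)]]
      continuous_on_definable_functions[OF S]
    by blast
  have "p \<phi> = eval M a \<phi>" if "\<phi> \<in> fmls L n" for \<phi>
    using eval state_of_type_eval[OF assms(1) _ that] assms(3) that
    by (auto simp: definable_functions_def extreme_types_def extreme_pt_def)
  then show ?thesis using a unfolding realizes_def by blast
qed

end
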